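(* Let $n\ge 2k+1$ and let $S$ be a vertex cut of $K(n,k)$ achieving the toughness of $K(n,k)$, i.e. $\frac{|S|}{c(K(n,k)\setminus S)}=t(K(n,k))$. Then every connected component of $K(n,k)\setminus S$ is either a single vertex, a copy of $K_2$, or is biconnected (2-connected).
   Context: The Kneser graph $K(n,k)$ has as vertices the $k$-element subsets of $[n]=\{1,\dots,n\}$, two vertices being adjacent iff they are disjoint. A vertex cut is a set $S$ of vertices whose removal disconnects the graph; $c(G\setminus S)$ is the number of connected components after deleting $S$; the toughness is $t(G)=\min_S |S|/c(G\setminus S)$ over vertex cuts $S$. *)

theory Defs
  imports Complex_Main
begin

definition induced_rel :: "('a \<Rightarrow> 'a \<Rightarrow> bool) \<Rightarrow> 'a set \<Rightarrow> 'a \<Rightarrow> 'a \<Rightarrow> bool" where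
  "induced_rel E A = (\<lambda>x y. x \<in> A \<and> y \<in> A \<and> E x y)"

definition components :: "('a \<Rightarrow> 'a \<Rightarrow> bool) \<Rightarrow> 'a set \<Rightarrow> 'a set set" where
  "components E V = {C. \<exists>x\<in>V. C = {y\<in>V. (induced_rel E V)\<^sup>*\<^sup>* x y}}"

definition connected_on :: "('a \<Rightarrow> 'a \<Rightarrow> bool) \<Rightarrow> 'a set \<Rightarrow> bool" where
  "connected_on E V = (V \<noteq> {} \<and> (\<forall>x\<in>V. \<forall>y\<in>V. (induced_rel E V)\<^sup>*\<^sup>* x y))"

definition vertex_cut :: "('a \<Rightarrow> 'a \<Rightarrow> bool) \<Rightarrow> 'a set \<Rightarrow> 'a set \<Rightarrow> bool" where
  "vertex_cut E V S = (S \<subseteq> V \<and> card (components E (V - S)) \<ge> 2)"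

definition toughness :: "('a \<Rightarrow> 'a \<Rightarrow> bool) \<Rightarrow> 'a set \<Rightarrow> real" where
  "toughness E V = Inf {real (card S) / real (card (components E (V - S))) | S. vertex_cut E V S}"

definition biconnected :: "('a \<Rightarrow> 'a \<Rightarrow> bool) \<Rightarrow> 'a set \<Rightarrow> bool" where
  "biconnected E C = (card C \<ge> 3 \<and> connected_on E C \<and> (\<forall>v\<in>C. connected_on E (C - {v})))"

definition kneser_vertices :: "nat \<Rightarrow> nat \<Rightarrow> nat set set" where
  "kneser_vertices n k = {A. A \<subseteq> {1..n} \<and> card A = k}"

definition kneser_adj :: "nat set \<Rightarrow> nat set \<Rightarrow> bool" where
  "kneser_adj A B = (A \<inter> B = {})"

end

theory Submission
  imports Defs
begin

(* If a component C of K(n,k) - S with at least three vertices had a cut vertex v, then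
   S \<union> {v} would be a vertex cut leaving at least c + 1 components, where c is the number of
   components of K(n,k) - S; since (|S| + 1) / (c + 1) < |S| / c whenever c < |S|, this
   contradicts the minimality of |S| / c. So it suffices that every vertex cut S of K(n,k),
   k \<ge> 2, leaves fewer than |S| components. Count the edges between S and the rest: each
   component sends at least d = C(n - k, k) edges to S, and more than d unless it is a single
   vertex, because K(n,k) is super edge-connected (Mader's atom argument for vertex-transitive
   graphs, using that K(n,k) has no clique of size d). As S receives at most d |S| edges,
   c \<ge> |S| would make every component a single vertex and every neighbour of S lie outside S,
   i.e. K(n,k) would be bipartite; but it contains an odd cycle. *)

section \<open>Components\<close>

definition edge_closed :: "('a \<Rightarrow> 'a \<Rightarrow> bool) \<Rightarrow> 'a set \<Rightarrow> 'a set \<Rightarrow> bool" where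
  "edge_closed E F C \<longleftrightarrow> (\<forall>u\<in>C. \<forall>w\<in>F. E u w \<longrightarrow> w \<in> C)"

lemma induced_rel_rtranclp_mono:
  assumes "C \<subseteq> F" "(induced_rel E C)\<^sup>*\<^sup>* x y"
  shows "(induced_rel E F)\<^sup>*\<^sup>* x y"
proof -
  have "induced_rel E C \<le> induced_rel E F"
    using assms(1) by (auto simp: induced_rel_def)
  then show ?thesis
    using assms(2) rtranclp_mono by blast
qed

lemma induced_rel_rtranclp_edge_closed:
  assumes "edge_closed E F C" "C \<subseteq> F" "x \<in> C" "(induced_rel E F)\<^sup>*\<^sup>* x y"
  shows "(induced_rel E C)\<^sup>*\<^sup>* x y" "y \<in> C"
proof -
  from assms(4) have "(induced_rel E C)\<^sup>*\<^sup>* x y \<and> y \<in> C"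
  proof (induction rule: rtranclp_induct)
    case (step y z)
    then have "y \<in> C" and reach: "(induced_rel E C)\<^sup>*\<^sup>* x y"
      by simp_all
    then have edge: "induced_rel E C y z"
      using step.hyps(2) assms(1) unfolding induced_rel_def edge_closed_def by blast
    then have "z \<in> C"
      unfolding induced_rel_def by blast
    then show ?case
      using rtranclp.rtrancl_into_rtrancl[OF reach edge] by blast
  qed (use assms(3) in simp)
  then show "(induced_rel E C)\<^sup>*\<^sup>* x y" "y \<in> C" by simp_all
qed

lemma induced_rel_symp: "symp E \<Longrightarrow> symp (induced_rel E F)"
  unfolding symp_def induced_rel_def by blast

lemma components_iff:
  assumes "symp E"
  shows "C \<in> components E F \<longleftrightarrow> C \<subseteq> F \<and> connected_on E C \<and> edge_closed E F C"
proof
  assume "C \<in> components E F"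
  then obtain x where x: "x \<in> F" and C: "C = {y\<in>F. (induced_rel E F)\<^sup>*\<^sup>* x y}"
    unfolding components_def by blast
  have closed: "edge_closed E F C"
    unfolding edge_closed_def C
    by (auto intro: rtranclp.rtrancl_into_rtrancl simp: induced_rel_def)
  have "(induced_rel E C)\<^sup>*\<^sup>* y z" if "y \<in> C" "z \<in> C" for y z
  proof -
    have "(induced_rel E F)\<^sup>*\<^sup>* y x"
      using that(1) C sympD[OF symp_rtranclp[OF induced_rel_symp[OF assms]]] by blast
    then have "(induced_rel E F)\<^sup>*\<^sup>* y z"
      using that(2) C by (auto intro: rtranclp_trans)
    then show ?thesis
      using induced_rel_rtranclp_edge_closed(1)[OF closed _ that(1)] C by blast
  qed
  then show "C \<subseteq> F \<and> connected_on E C \<and> edge_closed E F C"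
    using closed x C unfolding connected_on_def by auto
next
  assume "C \<subseteq> F \<and> connected_on E C \<and> edge_closed E F C"
  then have sub: "C \<subseteq> F" and conn: "connected_on E C" and closed: "edge_closed E F C"
    by simp_all
  obtain x where x: "x \<in> C"
    using conn unfolding connected_on_def by blast
  have "C = {y\<in>F. (induced_rel E F)\<^sup>*\<^sup>* x y}"
    using sub x conn induced_rel_rtranclp_edge_closed(2)[OF closed sub x]
      induced_rel_rtranclp_mono[OF sub] unfolding connected_on_def by blast
  then show "C \<in> components E F"
    using sub x unfolding components_def by blast
qed

lemma component_subset_if_meets:
  assumes "symp E" "C \<in> components E F" "D \<in> components E F" "x \<in> C" "x \<in> D"
  shows "D \<subseteq> C"
proof
  fix y assume "y \<in> D"
  have D: "D \<subseteq> F" "connected_on E D" and C: "C \<subseteq> F" "edge_closed E F C"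
    using assms(2,3) unfolding components_iff[OF assms(1)] by simp_all
  have "(induced_rel E F)\<^sup>*\<^sup>* x y"
    using D \<open>y \<in> D\<close> assms(5) induced_rel_rtranclp_mono unfolding connected_on_def by metis
  then show "y \<in> C"
    using induced_rel_rtranclp_edge_closed(2)[OF C(2,1) assms(4)] by blast
qed

lemma components_disjoint:
  assumes "symp E" "C \<in> components E F" "D \<in> components E F" "x \<in> C" "x \<in> D"
  shows "C = D"
  using component_subset_if_meets[OF assms] component_subset_if_meets[OF assms(1,3,2,5,4)]
  by blast

lemma component_in_components:
  "x \<in> F \<Longrightarrow> {y\<in>F. (induced_rel E F)\<^sup>*\<^sup>* x y} \<in> components E F"
  unfolding components_def by blast

lemma Union_components: "\<Union> (components E F) = F"
  unfolding components_def by auto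

lemma finite_components: "finite F \<Longrightarrow> finite (components E F)"
  by (rule finite_subset[of _ "Pow F"]) (auto simp: components_def)

lemma components_of_connected: "connected_on E V \<Longrightarrow> components E V = {V}"
  unfolding components_def connected_on_def by auto

lemma edge_closed_connected_eq:
  assumes "connected_on E V" "A \<subseteq> V" "A \<noteq> {}" "edge_closed E V A"
  shows "A = V"
proof -
  obtain u where "u \<in> A"
    using assms(3) by blast
  then have "w \<in> A" if "w \<in> V" for w
    using assms that induced_rel_rtranclp_edge_closed(2)[OF assms(4,2)] unfolding connected_on_def
    by blast
  then show ?thesis
    using assms(2) by blast
qed

lemma components_of_complete:
  assumes "\<And>x y. x \<in> F \<Longrightarrow> y \<in> F \<Longrightarrow> x \<noteq> y \<Longrightarrow> E x y"
  shows "components E F \<subseteq> {F}"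
proof
  fix C assume "C \<in> components E F"
  then obtain x where "x \<in> F" "C = {y\<in>F. (induced_rel E F)\<^sup>*\<^sup>* x y}"
    unfolding components_def by blast
  moreover have "(induced_rel E F)\<^sup>*\<^sup>* x y" if "x \<in> F" "y \<in> F" for y
    using that assms[OF that] by (cases "x = y") (auto simp: induced_rel_def)
  ultimately show "C \<in> {F}" by auto
qed

lemma component_of_subset:
  assumes "symp E" "D \<in> components E F" "D \<subseteq> F'" "F' \<subseteq> F"
  shows "D \<in> components E F'"
proof -
  have "connected_on E D" "edge_closed E F D"
    using assms(2) by (simp_all add: components_iff[OF assms(1)])
  moreover have "edge_closed E F' D"
    using \<open>edge_closed E F D\<close> assms(4) unfolding edge_closed_def by blast
  ultimately show ?thesis
    using assms(3) by (simp add: components_iff[OF assms(1)])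
qed

lemma sum_over_components:
  assumes "symp E" "finite F"
  shows "(\<Sum>u\<in>F. g u) = (\<Sum>C\<in>components E F. \<Sum>u\<in>C. g u)"
proof -
  have "finite C" if "C \<in> components E F" for C
    using that assms(2) by (auto simp: components_iff[OF assms(1)] intro: finite_subset)
  moreover have "C \<inter> D = {}" if "C \<in> components E F" "D \<in> components E F" "C \<noteq> D" for C D
    using that components_disjoint[OF assms(1)] by blast
  ultimately have "sum g (\<Union> (components E F)) = (\<Sum>C\<in>components E F. sum g C)"
    by (subst sum.Union_disjoint) auto
  then show ?thesis
    by (simp only: Union_components)
qed

lemma components_Diff_vertex:
  assumes "symp E" "C \<in> components E F" "v \<in> C"
  shows "components E F - {C} \<subseteq> components E (F - {v})"
proof
  fix D assume "D \<in> components E F - {C}"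
  then have D: "D \<in> components E F" "D \<noteq> C" by simp_all
  have "v \<notin> D"
  proof
    assume "v \<in> D"
    then have "C = D"
      by (rule components_disjoint[OF assms(1,2) D(1) assms(3)])
    with D(2) show False by simp
  qed
  moreover have "D \<subseteq> F"
    using D(1) by (simp add: components_iff[OF assms(1)])
  ultimately show "D \<in> components E (F - {v})"
    by (intro component_of_subset[OF assms(1) D(1)]) auto
qed

lemma components_grow_at_cut_vertex:
  assumes "symp E" "finite F" "C \<in> components E F" "v \<in> C"
    and x: "x \<in> C - {v}" and y: "y \<in> C - {v}"
    and separated: "\<not> (induced_rel E (C - {v}))\<^sup>*\<^sup>* x y"
  shows "card (components E F) < card (components E (F - {v}))"
proof -
  define comp where "comp z = {w\<in>F - {v}. (induced_rel E (F - {v}))\<^sup>*\<^sup>* z w}" for z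
  have CF: "C \<subseteq> F" and C_closed: "edge_closed E F C"
    using assms(3) by (simp_all add: components_iff[OF assms(1)])
  have comp_mem: "z \<in> comp z" "comp z \<in> components E (F - {v})" if "z \<in> C - {v}" for z
    using that CF component_in_components[of z "F - {v}" E] unfolding comp_def by auto
  have "y \<notin> comp x"
  proof
    assume "y \<in> comp x"
    then have "(induced_rel E (F - {v}))\<^sup>*\<^sup>* x y"
      unfolding comp_def by simp
    moreover have "edge_closed E (F - {v}) (C - {v})"
      using C_closed unfolding edge_closed_def by blast
    ultimately show False
      using induced_rel_rtranclp_edge_closed(1)[of E "F - {v}" "C - {v}" x y] CF x separated
      by blast
  qed
  then have distinct: "comp x \<noteq> comp y"
    using comp_mem(1)[OF y] by blast
  have not_old: "comp z \<notin> components E F - {C}" if "z \<in> C - {v}" for z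
  proof
    assume "comp z \<in> components E F - {C}"
    then show False
      using components_disjoint[OF assms(1) assms(3), of "comp z" z] comp_mem(1)[OF that] that
      by blast
  qed
  have "components E F - {C} \<subseteq> components E (F - {v})"
    using assms(1,3,4) by (rule components_Diff_vertex)
  then have "(components E F - {C}) \<union> {comp x, comp y} \<subseteq> components E (F - {v})"
    using comp_mem(2)[OF x] comp_mem(2)[OF y] by blast
  moreover have "finite (components E (F - {v}))"
    using assms(2) by (simp add: finite_components)
  ultimately have "card ((components E F - {C}) \<union> {comp x, comp y}) \<le> card (components E (F - {v}))"
    by (simp add: card_mono)
  moreover have "(components E F - {C}) \<inter> {comp x, comp y} = {}"
    using not_old[OF x] not_old[OF y] by blast
  then have "card ((components E F - {C}) \<union> {comp x, comp y})
      = card (components E F - {C}) + 2"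
    using distinct finite_components[OF assms(2)] by (simp add: card_Un_disjoint)
  moreover have "card (components E F - {C}) + 1 = card (components E F)"
    using assms(3) finite_components[OF assms(2)] card_Suc_Diff1 by fastforce
  ultimately show ?thesis
    by linarith
qed

lemma toughness_le:
  assumes "vertex_cut E V S"
  shows "toughness E V \<le> real (card S) / real (card (components E (V - S)))"
proof -
  let ?ratios = "{real (card S) / real (card (components E (V - S))) | S. vertex_cut E V S}"
  have "bdd_below ?ratios"
    by (rule bdd_belowI[of _ 0]) auto
  then show ?thesis
    unfolding toughness_def using assms by (auto intro: cInf_lower)
qed

lemma cut_vertex_if_not_biconnected:
  assumes "connected_on E C" "3 \<le> card C" "\<not> biconnected E C"
  obtains v x y where "v \<in> C" "x \<in> C - {v}" "y \<in> C - {v}"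
    "\<not> (induced_rel E (C - {v}))\<^sup>*\<^sup>* x y"
proof -
  obtain v where v: "v \<in> C" "\<not> connected_on E (C - {v})"
    using assms unfolding biconnected_def by blast
  have "C - {v} \<noteq> {}"
  proof
    assume "C - {v} = {}"
    then have "C = {v}"
      using v(1) by blast
    then show False
      using assms(2) by simp
  qed
  then show ?thesis
    using that v unfolding connected_on_def by blast
qed

theorem tough_cut_components:
  assumes "symp E" "finite V"
    and fewer: "\<And>T. vertex_cut E V T \<Longrightarrow> card (components E (V - T)) < card T"
    and cut: "vertex_cut E V S"
    and tough: "real (card S) / real (card (components E (V - S))) = toughness E V"
    and C: "C \<in> components E (V - S)"
  shows "card C = 1 \<or> (card C = 2 \<and> connected_on E C) \<or> biconnected E C"
proof (rule ccontr)
  assume neg: "\<not> ?thesis"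
  let ?c = "card (components E (V - S))"
  have S: "S \<subseteq> V" and two: "2 \<le> ?c"
    using cut unfolding vertex_cut_def by simp_all
  have conn: "connected_on E C" and CV: "C \<subseteq> V - S"
    using C by (simp_all add: components_iff[OF assms(1)])
  have "finite C"
    using CV assms(2) by (meson finite_Diff finite_subset)
  moreover have "C \<noteq> {}"
    using conn unfolding connected_on_def by simp
  ultimately have "card C \<noteq> 0" "card C \<noteq> 1" "card C \<noteq> 2"
    using neg conn by simp_all
  then have "3 \<le> card C"
    by linarith
  then obtain v x y where v: "v \<in> C"
    and xy: "x \<in> C - {v}" "y \<in> C - {v}" "\<not> (induced_rel E (C - {v}))\<^sup>*\<^sup>* x y"
    using cut_vertex_if_not_biconnected conn neg by blast
  have "V - insert v S = (V - S) - {v}"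
    by auto
  then have grow: "?c < card (components E (V - insert v S))"
    using components_grow_at_cut_vertex[OF assms(1) _ C v(1) xy] assms(2) by simp
  have "v \<in> V" "v \<notin> S"
    using v(1) CV by auto
  moreover have "finite S"
    using S assms(2) by (rule finite_subset)
  ultimately have cut': "vertex_cut E V (insert v S)" and card': "card (insert v S) = card S + 1"
    using S grow two unfolding vertex_cut_def by auto
  have "real (card S) / ?c = toughness E V"
    by (rule tough)
  also have "\<dots> \<le> real (card S + 1) / card (components E (V - insert v S))"
    using toughness_le[OF cut'] card' by simp
  also have "\<dots> \<le> real (card S + 1) / (?c + 1)"
    using grow by (intro divide_left_mono) auto
  finally have "real (card S) * (?c + 1) \<le> real (card S + 1) * ?c"
    using two by (simp add: field_simps)
  then have "card S \<le> ?c"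
    by (simp add: algebra_simps)
  with fewer[OF cut] show False
    by simp
qed

section \<open>Edge cuts in regular graphs\<close>

definition cross_edges :: "('a \<Rightarrow> 'a \<Rightarrow> bool) \<Rightarrow> 'a set \<Rightarrow> 'a set \<Rightarrow> nat" where
  "cross_edges E A B = card {(u, v). u \<in> A \<and> v \<in> B \<and> E u v}"

lemma cross_edges_eq_sum:
  assumes "finite A" "finite B"
  shows "cross_edges E A B = (\<Sum>u\<in>A. card {v\<in>B. E u v})"
proof -
  have "{(u, v). u \<in> A \<and> v \<in> B \<and> E u v} = (SIGMA u:A. {v\<in>B. E u v})"
    by auto
  then show ?thesis
    unfolding cross_edges_def using assms by simp
qed

lemma cross_edges_commute:
  assumes "symp E"
  shows "cross_edges E A B = cross_edges E B A"
proof -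
  have "{(u, v). u \<in> B \<and> v \<in> A \<and> E u v} = prod.swap ` {(u, v). u \<in> A \<and> v \<in> B \<and> E u v}"
    using assms by (auto simp: symp_def image_iff)
  then show ?thesis
    unfolding cross_edges_def by (simp add: card_image)
qed

lemma sum_eq_const_if_lower_bound:
  fixes f :: "'a \<Rightarrow> nat"
  assumes "finite I" "\<And>i. i \<in> I \<Longrightarrow> c \<le> f i" "sum f I \<le> card I * c" "i \<in> I"
  shows "f i = c"
proof (rule ccontr)
  assume "f i \<noteq> c"
  then have "(\<Sum>i\<in>I. c) < sum f I"
    using assms by (intro sum_strict_mono_ex1) (auto intro: le_neq_implies_less)
  then show False
    using assms(3) by simp
qed

lemma sum_eq_const_if_upper_bound:
  fixes f :: "'a \<Rightarrow> nat"
  assumes "finite I" "\<And>i. i \<in> I \<Longrightarrow> f i \<le> c" "card I * c \<le> sum f I" "i \<in> I"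
  shows "f i = c"
proof (rule ccontr)
  assume "f i \<noteq> c"
  then have "sum f I < (\<Sum>i\<in>I. c)"
    using assms by (intro sum_strict_mono_ex1) (auto intro: le_neq_implies_less)
  then show False
    using assms(3) by simp
qed

locale regular_graph =
  fixes E :: "'a \<Rightarrow> 'a \<Rightarrow> bool" and V :: "'a set" and d :: nat
  assumes finite_V: "finite V"
    and symp_E: "symp E"
    and irreflexive: "u \<in> V \<Longrightarrow> \<not> E u u"
    and degree: "u \<in> V \<Longrightarrow> card {v\<in>V. E u v} = d"
begin

definition boundary :: "'a set \<Rightarrow> nat" where
  "boundary X = cross_edges E X (V - X)"

lemma boundary_eq_sum:
  "X \<subseteq> V \<Longrightarrow> boundary X = (\<Sum>u\<in>X. card {v\<in>V - X. E u v})"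
  unfolding boundary_def using finite_V by (simp add: cross_edges_eq_sum finite_subset)

lemma boundary_singleton:
  assumes "u \<in> V"
  shows "boundary {u} = d"
proof -
  have "{v\<in>V - {u}. E u v} = {v\<in>V. E u v}"
    using irreflexive[OF assms] by blast
  then show ?thesis
    using assms degree[OF assms] by (simp add: boundary_eq_sum)
qed

lemma boundary_compl:
  assumes "X \<subseteq> V"
  shows "boundary (V - X) = boundary X"
proof -
  have "V - (V - X) = X"
    using assms by blast
  then show ?thesis
    unfolding boundary_def by (simp add: cross_edges_commute[OF symp_E])
qed

lemma boundary_Int_Un:
  assumes "X \<subseteq> V" "Y \<subseteq> V"
  shows "boundary (X \<inter> Y) + boundary (X \<union> Y) \<le> boundary X + boundary Y"
proof -
  define P where "P Z = {(u, v). u \<in> Z \<and> v \<in> V - Z \<and> E u v}" for Z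
  have fin: "finite (P Z)" if "Z \<subseteq> V" for Z
    by (rule finite_subset[of _ "V \<times> V"]) (use that in \<open>auto simp: P_def finite_V\<close>)
  have "card (P (X \<inter> Y)) + card (P (X \<union> Y))
      = card (P (X \<inter> Y) \<union> P (X \<union> Y)) + card (P (X \<inter> Y) \<inter> P (X \<union> Y))"
    using assms by (intro card_Un_Int fin) auto
  also have "\<dots> \<le> card (P X \<union> P Y) + card (P X \<inter> P Y)"
  proof -
    have "P (X \<inter> Y) \<union> P (X \<union> Y) \<subseteq> P X \<union> P Y" "P (X \<inter> Y) \<inter> P (X \<union> Y) \<subseteq> P X \<inter> P Y"
      unfolding P_def by auto
    moreover have "finite (P X \<union> P Y)" "finite (P X \<inter> P Y)"
      using fin assms by auto
    ultimately show ?thesis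
      by (meson add_mono card_mono)
  qed
  also have "\<dots> = card (P X) + card (P Y)"
    using assms by (intro card_Un_Int[symmetric] fin)
  finally show ?thesis
    unfolding boundary_def cross_edges_def P_def .
qed

lemma boundary_Diff:
  assumes "X \<subseteq> V" "Y \<subseteq> V"
  shows "boundary (X - Y) + boundary (Y - X) \<le> boundary X + boundary Y"
proof -
  have "X \<inter> (V - Y) = X - Y" "X \<union> (V - Y) = V - (Y - X)" "Y - X \<subseteq> V"
    using assms by blast+
  then show ?thesis
    using boundary_Int_Un[of X "V - Y"] assms boundary_compl[of Y] boundary_compl[of "Y - X"]
    by simp
qed

lemma degree_split:
  assumes "A \<subseteq> V" "u \<in> V"
  shows "card {x\<in>A. E u x} + card {x\<in>V - A. E u x} = d"
proof -
  have "{x\<in>V. E u x} = {x\<in>A. E u x} \<union> {x\<in>V - A. E u x}"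
    using assms(1) by blast
  moreover have "finite {x\<in>A. E u x}" "finite {x\<in>V - A. E u x}"
    using assms(1) finite_V by (auto intro: finite_subset)
  ultimately show ?thesis
    using degree[OF assms(2)] by (simp add: card_Un_disjoint disjoint_iff)
qed

lemma inner_degree_le:
  assumes "A \<subseteq> V" "u \<in> A"
  shows "card {x\<in>A. E u x} \<le> card A - 1"
proof -
  have "{x\<in>A. E u x} \<subseteq> A - {u}"
    using assms irreflexive by blast
  moreover have "finite A"
    using assms(1) finite_V by (rule finite_subset)
  ultimately show ?thesis
    using assms(2) by (metis card_Diff_singleton card_mono finite_Diff)
qed

lemma degree_minus_one_le:
  assumes "x \<in> V"
  shows "d - 1 \<le> card {w\<in>V - {x, y}. E x w}"
proof -
  have "{w\<in>V - {x, y}. E x w} = {w\<in>V. E x w} - {y}"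
    using irreflexive[OF assms] by blast
  then show ?thesis
    using degree[OF assms] finite_V by (simp add: card_Diff_singleton_if)
qed

definition nontrivial_cut :: "'a set \<Rightarrow> bool" where
  "nontrivial_cut X \<longleftrightarrow> X \<subseteq> V \<and> 2 \<le> card X \<and> 2 \<le> card (V - X)"

lemma cross_edges_component:
  assumes "C \<in> components E (V - S)" "S \<subseteq> V"
  shows "cross_edges E C S = boundary C"
proof -
  have "C \<subseteq> V - S" "edge_closed E (V - S) C"
    using assms(1) by (simp_all add: components_iff[OF symp_E])
  then have "{(u, v). u \<in> C \<and> v \<in> S \<and> E u v} = {(u, v). u \<in> C \<and> v \<in> V - C \<and> E u v}"
    using assms(2) unfolding edge_closed_def by blast
  then show ?thesis
    unfolding boundary_def cross_edges_def by simp
qed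

lemma cross_edges_component_ge:
  assumes super: "\<And>X. nontrivial_cut X \<Longrightarrow> d < boundary X"
    and cut: "vertex_cut E V S" and "S \<noteq> {}" and C: "C \<in> components E (V - S)"
  shows "d \<le> cross_edges E C S" "2 \<le> card C \<Longrightarrow> d < cross_edges E C S"
proof -
  have S: "S \<subseteq> V" and two: "2 \<le> card (components E (V - S))"
    using cut unfolding vertex_cut_def by simp_all
  have CV: "C \<subseteq> V - S" "C \<noteq> {}"
    using C by (simp_all add: components_iff[OF symp_E] connected_on_def)
  show strict: "d < cross_edges E C S" if "2 \<le> card C"
  proof -
    have "\<not> components E (V - S) \<subseteq> {C}"
      using two card_mono[of "{C}" "components E (V - S)"] by auto
    then obtain D where D: "D \<in> components E (V - S)" "D \<noteq> C"
      by blast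
    moreover have "D \<noteq> {}" "D \<subseteq> V - S"
      using D(1) by (simp_all add: components_iff[OF symp_E] connected_on_def)
    ultimately obtain w where "w \<in> V - S" "w \<notin> C"
      using components_disjoint[OF symp_E C] by blast
    moreover obtain s where "s \<in> S"
      using \<open>S \<noteq> {}\<close> by blast
    ultimately have "{w, s} \<subseteq> V - C" "card {w, s} = 2"
      using S CV by (auto simp: card_2_iff)
    then have "2 \<le> card (V - C)"
      using finite_V by (metis card_mono finite_Diff)
    then have "nontrivial_cut C"
      using that CV unfolding nontrivial_cut_def by auto
    then show ?thesis
      using super cross_edges_component[OF C S] by simp
  qed
  show "d \<le> cross_edges E C S"
  proof (cases "card C = 1")
    case True
    then obtain u where "C = {u}"
      by (meson card_1_singletonE)
    then show ?thesis
      using boundary_singleton[of u] cross_edges_component[OF C S] CV by simp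
  next
    case False
    moreover have "finite C"
      using CV finite_V by (meson finite_Diff finite_subset)
    ultimately have "2 \<le> card C"
      using CV(2) by (metis One_nat_def card_0_eq less_2_cases not_le)
    then show ?thesis
      using strict by simp
  qed
qed

lemma bipartite_by_cut:
  assumes singletons: "\<And>C. C \<in> components E (V - S) \<Longrightarrow> card C = 1"
    and independent: "\<And>x y. x \<in> S \<Longrightarrow> y \<in> S \<Longrightarrow> \<not> E x y"
    and "x \<in> V" "y \<in> V" "E x y"
  shows "x \<in> S \<longleftrightarrow> y \<notin> S"
proof (cases "x \<in> S")
  case True
  then show ?thesis
    using independent assms(5) by blast
next
  case False
  then have "x \<in> \<Union> (components E (V - S))"
    using assms(3) by (simp add: Union_components)
  then obtain C where C: "C \<in> components E (V - S)" "x \<in> C"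
    by blast
  then have "C = {x}"
    using singletons[OF C(1)] by (metis card_1_singletonE singletonD)
  moreover have "edge_closed E (V - S) C"
    using C(1) by (simp add: components_iff[OF symp_E])
  ultimately have "y \<notin> V - S"
    using C(2) irreflexive[OF assms(3)] assms(5) unfolding edge_closed_def by blast
  then show ?thesis
    using False assms(4) by blast
qed

lemma sum_cross_edges_components:
  assumes "S \<subseteq> V"
  shows "(\<Sum>C\<in>components E (V - S). cross_edges E C S) = (\<Sum>x\<in>S. card {v\<in>V - S. E x v})"
proof -
  have fin: "finite S" "finite (V - S)"
    using assms finite_V by (auto intro: finite_subset)
  have fin_C: "finite C" if "C \<in> components E (V - S)" for C
    using that fin(2) by (auto simp: components_iff[OF symp_E] intro: finite_subset)
  have "(\<Sum>C\<in>components E (V - S). cross_edges E C S)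
      = (\<Sum>C\<in>components E (V - S). \<Sum>u\<in>C. card {v\<in>S. E u v})"
    using fin fin_C by (simp add: cross_edges_eq_sum)
  also have "\<dots> = (\<Sum>u\<in>V - S. card {v\<in>S. E u v})"
    by (rule sum_over_components[OF symp_E fin(2), symmetric])
  also have "\<dots> = cross_edges E S (V - S)"
    using fin by (simp add: cross_edges_commute[OF symp_E, of S] cross_edges_eq_sum)
  also have "\<dots> = (\<Sum>x\<in>S. card {v\<in>V - S. E x v})"
    using fin by (simp add: cross_edges_eq_sum)
  finally show ?thesis .
qed

lemma components_less_than_cut:
  assumes conn: "connected_on E V"
    and super: "\<And>X. nontrivial_cut X \<Longrightarrow> d < boundary X"
    and odd: "\<And>F. \<exists>x\<in>V. \<exists>y\<in>V. E x y \<and> (x \<in> F \<longleftrightarrow> y \<in> F)"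
    and cut: "vertex_cut E V S"
  shows "card (components E (V - S)) < card S"
proof (rule ccontr)
  \<comment> \<open>Double counting the edges between the components and S.\<close>
  let ?cs = "components E (V - S)"
  let ?out = "\<lambda>x. card {v\<in>V - S. E x v}"
  assume "\<not> card ?cs < card S"
  then have le: "card S * d \<le> card ?cs * d"
    by simp
  have S: "S \<subseteq> V" and two: "2 \<le> card ?cs"
    using cut unfolding vertex_cut_def by simp_all
  have fin: "finite S" "finite ?cs"
    using S finite_V by (auto intro: finite_subset finite_components)
  have "S \<noteq> {}"
    using two components_of_connected[OF conn] by auto
  have per_component: "d \<le> cross_edges E C S" "2 \<le> card C \<Longrightarrow> d < cross_edges E C S"
    if "C \<in> ?cs" for C
    using cross_edges_component_ge[OF super cut \<open>S \<noteq> {}\<close> that] by simp_all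
  have split: "card {v\<in>S. E x v} + ?out x = d" if "x \<in> S" for x
    using degree_split[of "V - S" x] subsetD[OF S that] S by (simp add: Diff_Diff_Int Int_absorb1 add.commute)
  have out_le: "?out x \<le> d" if "x \<in> S" for x
    using split[OF that] by linarith
  have sums: "(\<Sum>C\<in>?cs. cross_edges E C S) = (\<Sum>x\<in>S. ?out x)"
    using S by (rule sum_cross_edges_components)
  have lower: "card ?cs * d \<le> (\<Sum>C\<in>?cs. cross_edges E C S)"
    using sum_mono[of ?cs "\<lambda>_. d"] per_component(1) by simp
  have upper: "(\<Sum>x\<in>S. ?out x) \<le> card S * d"
    using sum_mono[of S ?out "\<lambda>_. d"] out_le by simp
  have "card C = 1" if C: "C \<in> ?cs" for C
  proof -
    have "cross_edges E C S = d"
      using sum_eq_const_if_lower_bound[of ?cs d "\<lambda>C. cross_edges E C S", OF fin(2) per_component(1) _ C]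
        sums upper le by linarith
    moreover have "card C \<noteq> 0"
      using C finite_V by (auto simp: components_iff[OF symp_E] connected_on_def dest: finite_subset)
    ultimately show ?thesis
      using per_component(2)[OF C] by linarith
  qed
  moreover have "\<not> E x y" if "x \<in> S" "y \<in> S" for x y
  proof -
    have "?out x = d"
      using sum_eq_const_if_upper_bound[of S ?out d, OF fin(1) out_le _ that(1)] sums lower le
      by linarith
    then have "{v\<in>S. E x v} = {}"
      using split[OF that(1)] fin(1) by simp
    then show ?thesis
      using that(2) by blast
  qed
  moreover obtain x y where "x \<in> V" "y \<in> V" "E x y" "x \<in> S \<longleftrightarrow> y \<in> S"
    using odd[of S] by blast
  ultimately show False
    using bipartite_by_cut by blast
qed

section \<open>Edge atoms\<close>

text \<open>The atoms of Mader and Watkins, for cuts with at least two vertices on each side.\<close>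

definition edge_atom :: "nat \<Rightarrow> 'a set \<Rightarrow> bool" where
  "edge_atom m A \<longleftrightarrow> nontrivial_cut A \<and> boundary A = m \<and>
     (\<forall>Y. nontrivial_cut Y \<longrightarrow> m \<le> boundary Y \<and> (boundary Y = m \<longrightarrow> card A \<le> card Y))"

lemma edge_atom_exists:
  assumes "nontrivial_cut X"
  obtains m A where "edge_atom m A" "m \<le> boundary X"
proof -
  obtain Y where Y: "nontrivial_cut Y" "\<forall>Z. nontrivial_cut Z \<longrightarrow> boundary Y \<le> boundary Z"
    using ex_has_least_nat[of nontrivial_cut X boundary] assms by blast
  obtain A where "nontrivial_cut A \<and> boundary A = boundary Y"
    and "\<forall>Z. nontrivial_cut Z \<and> boundary Z = boundary Y \<longrightarrow> card A \<le> card Z"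
    using ex_has_least_nat[of "\<lambda>Z. nontrivial_cut Z \<and> boundary Z = boundary Y" Y card] Y(1)
    by blast
  then have "edge_atom (boundary Y) A"
    using Y unfolding edge_atom_def by auto
  then show ?thesis
    using that Y assms by blast
qed

lemma edge_atom_le_boundary:
  assumes "edge_atom m A" "m \<le> d" "Z \<subseteq> V" "Z \<noteq> {}" "Z \<noteq> V"
  shows "m \<le> boundary Z"
proof -
  have "finite Z" "finite (V - Z)" "V - Z \<noteq> {}"
    using finite_V assms(3-5) finite_subset by auto
  then have "card Z \<noteq> 0" "card (V - Z) \<noteq> 0"
    using assms(4) by simp_all
  then consider "card Z = 1" | "card (V - Z) = 1" | "nontrivial_cut Z"
    using assms(3) unfolding nontrivial_cut_def by linarith
  then show ?thesis
  proof cases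
    case 1
    then obtain u where "Z = {u}"
      by (meson card_1_singletonE)
    then show ?thesis
      using assms(2,3) boundary_singleton by simp
  next
    case 2
    then obtain u where u: "V - Z = {u}"
      by (meson card_1_singletonE)
    then have "boundary Z = d"
      using boundary_compl[OF assms(3)] boundary_singleton[of u] by auto
    then show ?thesis
      using assms(2) by simp
  next
    case 3
    then show ?thesis
      using assms(1) unfolding edge_atom_def by blast
  qed
qed

lemma edge_atom_card_ge_3:
  assumes "edge_atom m A" "m \<le> d" "3 \<le> d"
  shows "3 \<le> card A"
proof (rule ccontr)
  assume "\<not> 3 \<le> card A"
  then have "card A = 2"
    using assms(1) unfolding edge_atom_def nontrivial_cut_def by simp
  then obtain u v where A: "A = {u, v}" "u \<noteq> v"
    by (meson card_2_iff)
  have "u \<in> V" "v \<in> V"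
    using assms(1) A unfolding edge_atom_def nontrivial_cut_def by auto
  then have "2 * (d - 1) \<le> card {w\<in>V - {u, v}. E u w} + card {w\<in>V - {v, u}. E v w}"
    using degree_minus_one_le[of u v] degree_minus_one_le[of v u] by linarith
  also have "\<dots> = boundary A"
    using A \<open>u \<in> V\<close> \<open>v \<in> V\<close> by (simp add: boundary_eq_sum insert_commute)
  finally show False
    using assms unfolding edge_atom_def by linarith
qed

lemma edge_atom_proper_subset:
  assumes "edge_atom m A" "Z \<subset> A" "2 \<le> card Z"
  shows "m < boundary Z"
proof -
  have A: "A \<subseteq> V" "2 \<le> card (V - A)" "finite A"
    using assms(1) finite_V finite_subset unfolding edge_atom_def nontrivial_cut_def by auto
  have "card (V - A) \<le> card (V - Z)"
    using assms(2) finite_V by (intro card_mono) auto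
  then have "nontrivial_cut Z"
    using A assms(2,3) unfolding nontrivial_cut_def by auto
  moreover have "card Z < card A"
    using assms(2) A(3) by (rule psubset_card_mono[rotated])
  ultimately show ?thesis
    using assms(1) unfolding edge_atom_def by (meson le_neq_implies_less not_le)
qed

lemma edge_atoms_eq:
  assumes A: "edge_atom m A" and B: "edge_atom m B" and "m \<le> d" "3 \<le> d" "A \<inter> B \<noteq> {}"
  shows "A = B"
proof (rule ccontr)
  \<comment> \<open>Uncrossing: boundary_Diff forces card (A - B) = 1, and then boundary_Int_Un makes
    A \<inter> B a smaller nontrivial cut of boundary m.\<close>
  assume "A \<noteq> B"
  have sub: "A \<subseteq> V" "B \<subseteq> V" and bA: "boundary A = m" and bB: "boundary B = m"
    and V_A: "2 \<le> card (V - A)"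
    using A B unfolding edge_atom_def nontrivial_cut_def by simp_all
  have fin: "finite A" "finite B"
    using sub finite_V finite_subset by auto
  have "card A = card B"
    using A B unfolding edge_atom_def by (meson le_antisym)
  then have card_diffs: "card (B - A) = card (A - B)"
    using fin by (simp add: card_Diff_subset_Int Int_commute)
  have "A - B \<noteq> {}"
    using \<open>A \<noteq> B\<close> \<open>card A = card B\<close> fin by (metis Diff_eq_empty_iff card_subset_eq)
  then have "B - A \<noteq> {}"
    using card_diffs fin by (metis card_eq_0_iff finite_Diff)
  have "m \<le> boundary (A - B)" "m \<le> boundary (B - A)"
    using sub \<open>A - B \<noteq> {}\<close> \<open>B - A \<noteq> {}\<close> \<open>A \<inter> B \<noteq> {}\<close>
    by (auto intro!: edge_atom_le_boundary[OF A \<open>m \<le> d\<close>])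
  then have "boundary (A - B) = m"
    using boundary_Diff[OF sub] bA bB by linarith
  then have "\<not> 2 \<le> card (A - B)"
    using edge_atom_proper_subset[OF A, of "A - B"] \<open>A \<inter> B \<noteq> {}\<close> by blast
  moreover have "card (A - B) \<noteq> 0"
    using \<open>A - B \<noteq> {}\<close> fin by simp
  ultimately have one: "card (A - B) = 1"
    by linarith
  have "A \<union> B \<noteq> V"
  proof
    assume "A \<union> B = V"
    then have "V - A = B - A"
      by blast
    then show False
      using V_A card_diffs one by simp
  qed
  then have "m \<le> boundary (A \<union> B)"
    using sub \<open>A \<inter> B \<noteq> {}\<close> by (intro edge_atom_le_boundary[OF A \<open>m \<le> d\<close>]) auto
  then have "boundary (A \<inter> B) \<le> m"
    using boundary_Int_Un[OF sub] bA bB by linarith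
  moreover have "2 \<le> card (A \<inter> B)"
    using one edge_atom_card_ge_3[OF A \<open>m \<le> d\<close> \<open>3 \<le> d\<close>] fin
    by (simp add: card_Diff_subset_Int)
  then have "m < boundary (A \<inter> B)"
    using edge_atom_proper_subset[OF A, of "A \<inter> B"] \<open>A - B \<noteq> {}\<close> by blast
  ultimately show False
    by linarith
qed

definition automorphism :: "('a \<Rightarrow> 'a) \<Rightarrow> bool" where
  "automorphism f \<longleftrightarrow> bij_betw f V V \<and> (\<forall>x\<in>V. \<forall>y\<in>V. E (f x) (f y) \<longleftrightarrow> E x y)"

lemma automorphism_image_compl:
  assumes "automorphism f" "X \<subseteq> V"
  shows "V - f ` X = f ` (V - X)"
  using assms unfolding automorphism_def bij_betw_def
  by (metis Diff_subset inj_on_image_set_diff)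

lemma out_degree_automorphism:
  assumes f: "automorphism f" and "X \<subseteq> V" "u \<in> V"
  shows "card {w\<in>V - f ` X. E (f u) w} = card {w\<in>V - X. E u w}"
proof -
  have inj: "inj_on f V" and adj: "\<And>x y. x \<in> V \<Longrightarrow> y \<in> V \<Longrightarrow> E (f x) (f y) \<longleftrightarrow> E x y"
    using f unfolding automorphism_def bij_betw_def by auto
  have "{w\<in>V - f ` X. E (f u) w} = f ` {w\<in>V - X. E u w}"
    using automorphism_image_compl[OF assms(1,2)] adj assms(3) by auto
  moreover have "inj_on f {w\<in>V - X. E u w}"
    using inj by (rule inj_on_subset) auto
  ultimately show ?thesis
    by (simp add: card_image)
qed

lemma boundary_automorphism:
  assumes f: "automorphism f" and X: "X \<subseteq> V"
  shows "boundary (f ` X) = boundary X"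
proof -
  have "inj_on f X" "f ` X \<subseteq> V"
    using f X unfolding automorphism_def bij_betw_def by (auto intro: inj_on_subset)
  then have "boundary (f ` X) = (\<Sum>u\<in>X. card {w\<in>V - f ` X. E (f u) w})"
    by (simp add: boundary_eq_sum sum.reindex)
  also have "\<dots> = boundary X"
    using out_degree_automorphism[OF f X] X by (simp add: boundary_eq_sum subset_iff)
  finally show ?thesis .
qed

lemma edge_atom_automorphism:
  assumes f: "automorphism f" and A: "edge_atom m A"
  shows "edge_atom m (f ` A)"
proof -
  have AV: "A \<subseteq> V"
    using A unfolding edge_atom_def nontrivial_cut_def by simp
  have inj: "inj_on f V"
    using f unfolding automorphism_def bij_betw_def by simp
  have "card (f ` A) = card A"
    using inj_on_subset[OF inj AV] by (rule card_image)
  moreover have "card (V - f ` A) = card (V - A)"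
    unfolding automorphism_image_compl[OF f AV]
    using inj_on_subset[OF inj Diff_subset[of V A]] by (rule card_image)
  moreover have "f ` A \<subseteq> V"
    using f AV unfolding automorphism_def bij_betw_def by blast
  ultimately show ?thesis
    using A boundary_automorphism[OF f AV] unfolding edge_atom_def nontrivial_cut_def by simp
qed

end

locale vertex_transitive_graph = regular_graph +
  assumes vertex_transitive: "u \<in> V \<Longrightarrow> w \<in> V \<Longrightarrow> \<exists>f. automorphism f \<and> f u = w"
begin

lemma edge_atom_out_degree_uniform:
  assumes A: "edge_atom m A" and "m \<le> d" "3 \<le> d" "u \<in> A" "w \<in> A"
  shows "card {x\<in>V - A. E w x} = card {x\<in>V - A. E u x}"
proof -
  have AV: "A \<subseteq> V"
    using A unfolding edge_atom_def nontrivial_cut_def by simp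
  obtain f where f: "automorphism f" "f u = w"
    using vertex_transitive AV assms(4,5) by blast
  have "f ` A = A"
    using edge_atoms_eq[OF edge_atom_automorphism[OF f(1) A] A assms(2,3)] f(2) assms(4,5) by blast
  then show ?thesis
    using out_degree_automorphism[OF f(1) AV, of u] f(2) AV assms(4) by auto
qed

lemma edge_atom_out_degree:
  assumes atom: "edge_atom m A" and "m \<le> d" "3 \<le> d"
  obtains out where "\<And>u. u \<in> A \<Longrightarrow> card {x\<in>V - A. E u x} = out" "card A * out \<le> d"
    "d \<le> card A - 1 + out"
proof -
  have AV: "A \<subseteq> V" and bA: "boundary A = m" and "A \<noteq> {}"
    using atom unfolding edge_atom_def nontrivial_cut_def by auto
  then obtain u0 where u0: "u0 \<in> A"
    by blast
  define out where "out = card {x\<in>V - A. E u0 x}"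
  have out: "card {x\<in>V - A. E u x} = out" if "u \<in> A" for u
    unfolding out_def using edge_atom_out_degree_uniform[OF atom assms(2,3) u0 that] .
  moreover have "card A * out \<le> d"
    using bA \<open>m \<le> d\<close> AV out by (simp add: boundary_eq_sum)
  moreover have "d \<le> card A - 1 + out"
    using degree_split[OF AV, of u0] inner_degree_le[OF AV u0] out[OF u0] AV u0 by auto
  ultimately show ?thesis
    using that by blast
qed

theorem boundary_gt_degree:
  assumes conn: "connected_on E V" and "3 \<le> d"
    and no_clique: "\<And>K. K \<subseteq> V \<Longrightarrow> card K = d \<Longrightarrow> \<exists>u\<in>K. \<exists>w\<in>K. u \<noteq> w \<and> \<not> E u w"
    and X: "nontrivial_cut X"
  shows "d < boundary X"
proof (rule ccontr)
  assume "\<not> d < boundary X"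
  then obtain m A where atom: "edge_atom m A" and "m \<le> d"
    using edge_atom_exists[OF X] by (metis le_trans not_less)
  have AV: "A \<subseteq> V" and "A \<noteq> {}" "A \<noteq> V"
    using atom unfolding edge_atom_def nontrivial_cut_def by auto
  have "3 \<le> card A"
    using edge_atom_card_ge_3[OF atom \<open>m \<le> d\<close> \<open>3 \<le> d\<close>] .
  obtain out where out: "\<And>u. u \<in> A \<Longrightarrow> card {x\<in>V - A. E u x} = out"
    and upper: "card A * out \<le> d" and lower: "d \<le> card A - 1 + out"
    using edge_atom_out_degree[OF atom \<open>m \<le> d\<close> \<open>3 \<le> d\<close>] by blast
  have "out \<le> 1"
  proof (rule ccontr)
    assume "\<not> out \<le> 1"
    then have "card A * 2 \<le> card A * out" "3 * out \<le> card A * out"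
      using \<open>3 \<le> card A\<close> by simp_all
    then show False
      using upper lower \<open>3 \<le> card A\<close> by linarith
  qed
  then consider "out = 0" | "out = 1"
    by linarith
  then show False
  proof cases
    case 1
    then have "edge_closed E V A"
      using out finite_V unfolding edge_closed_def by fastforce
    then show False
      using edge_closed_connected_eq[OF conn AV \<open>A \<noteq> {}\<close>] \<open>A \<noteq> V\<close> by blast
  next
    case 2
    then have "card A = d"
      using upper lower \<open>3 \<le> card A\<close> by simp
    have "{x\<in>A. E u x} = A - {u}" if "u \<in> A" for u
    proof (rule card_subset_eq)
      show "finite (A - {u})" "{x\<in>A. E u x} \<subseteq> A - {u}"
        using AV finite_V irreflexive that by (auto intro: finite_subset)
      show "card {x\<in>A. E u x} = card (A - {u})"
        using degree_split[OF AV, of u] out[OF that] 2 \<open>card A = d\<close> that AV finite_V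
        by (simp add: finite_subset subsetD)
    qed
    then show False
      using no_clique[OF AV \<open>card A = d\<close>] by blast
  qed
qed

end

section \<open>Kneser graphs\<close>

lemma kneser_vertexD:
  assumes "A \<in> kneser_vertices n k"
  shows "A \<subseteq> {1..n}" "card A = k" "finite A"
  using assms unfolding kneser_vertices_def by (auto intro: finite_subset)

lemma finite_kneser_vertices: "finite (kneser_vertices n k)"
  by (rule finite_subset[of _ "Pow {1..n}"]) (auto simp: kneser_vertices_def)

lemma symp_kneser_adj: "symp kneser_adj"
  unfolding symp_def kneser_adj_def by blast

lemma kneser_degree:
  assumes "A \<in> kneser_vertices n k"
  shows "card {B\<in>kneser_vertices n k. kneser_adj A B} = (n - k) choose k"
proof -
  have "{B\<in>kneser_vertices n k. kneser_adj A B} = {B. B \<subseteq> {1..n} - A \<and> card B = k}"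
    unfolding kneser_vertices_def kneser_adj_def by auto
  moreover have "card ({1..n} - A) = n - k"
    using kneser_vertexD[OF assms] by (simp add: card_Diff_subset)
  ultimately show ?thesis
    by (simp add: n_subsets)
qed

lemma kneser_regular:
  assumes "1 \<le> k"
  shows "regular_graph kneser_adj (kneser_vertices n k) ((n - k) choose k)"
proof
  show "\<not> kneser_adj u u" if "u \<in> kneser_vertices n k" for u
    using that assms unfolding kneser_vertices_def kneser_adj_def by auto
qed (simp_all add: finite_kneser_vertices symp_kneser_adj kneser_degree)

lemma obtain_permutation_with_image:
  assumes "A \<in> kneser_vertices n k" "B \<in> kneser_vertices n k"
  obtains \<sigma> where "bij_betw \<sigma> {1..n} {1..n}" "\<sigma> ` A = B"
proof -
  note A = kneser_vertexD[OF assms(1)] and B = kneser_vertexD[OF assms(2)]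
  obtain g where g: "bij_betw g A B"
    using A B by (metis finite_same_card_bij)
  have "card ({1..n} - A) = card ({1..n} - B)"
    using A B by (simp add: card_Diff_subset)
  then obtain h where h: "bij_betw h ({1..n} - A) ({1..n} - B)"
    by (metis finite_same_card_bij finite_Diff finite_atLeastAtMost)
  define \<sigma> where "\<sigma> x = (if x \<in> A then g x else h x)" for x
  have "bij_betw \<sigma> A B" "bij_betw \<sigma> ({1..n} - A) ({1..n} - B)"
    using g h by (auto simp: \<sigma>_def intro: bij_betw_cong[THEN iffD1, rotated])
  then have "bij_betw \<sigma> (A \<union> ({1..n} - A)) (B \<union> ({1..n} - B))"
    by (rule bij_betw_combine) blast
  moreover have "A \<union> ({1..n} - A) = {1..n}" "B \<union> ({1..n} - B) = {1..n}"
    using A B by auto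
  ultimately show ?thesis
    using that \<open>bij_betw \<sigma> A B\<close> by (simp add: bij_betw_def)
qed

lemma kneser_vertex_transitive:
  assumes "1 \<le> k"
  shows "vertex_transitive_graph kneser_adj (kneser_vertices n k) ((n - k) choose k)"
proof -
  interpret regular_graph kneser_adj "kneser_vertices n k" "(n - k) choose k"
    using assms by (rule kneser_regular)
  have aut: "automorphism (image \<sigma>)" if \<sigma>: "bij_betw \<sigma> {1..n} {1..n}" for \<sigma>
  proof -
    have inj: "inj_on \<sigma> {1..n}" and onto: "\<sigma> ` {1..n} = {1..n}"
      using \<sigma> by (simp_all add: bij_betw_def)
    have maps: "\<sigma> ` A \<in> kneser_vertices n k" if "A \<in> kneser_vertices n k" for A
    proof -
      have "\<sigma> ` A \<subseteq> {1..n}" "card (\<sigma> ` A) = k"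
        using kneser_vertexD[OF that] onto card_image[OF inj_on_subset[OF inj]] by auto
      then show ?thesis
        unfolding kneser_vertices_def by simp
    qed
    have inj_image: "inj_on (image \<sigma>) (kneser_vertices n k)"
      using inj_on_image_eq_iff[OF inj] kneser_vertexD(1) by (metis inj_onI)
    then have "card (image \<sigma> ` kneser_vertices n k) = card (kneser_vertices n k)"
      by (rule card_image)
    then have "image \<sigma> ` kneser_vertices n k = kneser_vertices n k"
      using maps finite_kneser_vertices by (intro card_subset_eq) auto
    moreover have "kneser_adj (\<sigma> ` A) (\<sigma> ` B) \<longleftrightarrow> kneser_adj A B"
      if "A \<in> kneser_vertices n k" "B \<in> kneser_vertices n k" for A B
    proof -
      have "\<sigma> ` A \<inter> \<sigma> ` B = \<sigma> ` (A \<inter> B)"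
        using inj_on_image_Int[OF inj kneser_vertexD(1)[OF that(1)] kneser_vertexD(1)[OF that(2)]] ..
      then show ?thesis
        unfolding kneser_adj_def by simp
    qed
    ultimately show ?thesis
      using inj_image unfolding automorphism_def bij_betw_def by blast
  qed
  show ?thesis
  proof unfold_locales
    fix u w
    assume "u \<in> kneser_vertices n k" "w \<in> kneser_vertices n k"
    then obtain \<sigma> where "bij_betw \<sigma> {1..n} {1..n}" "\<sigma> ` u = w"
      by (rule obtain_permutation_with_image)
    then show "\<exists>f. automorphism f \<and> f u = w"
      using aut by blast
  qed
qed

lemma kneser_reachable:
  assumes n: "2 * k + 1 \<le> n" and A: "A \<in> kneser_vertices n k" and B: "B \<in> kneser_vertices n k"
  shows "(induced_rel kneser_adj (kneser_vertices n k))\<^sup>*\<^sup>* A B"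
  using A
proof (induction "card (A - B)" arbitrary: A)
  case 0
  then have "A \<subseteq> B"
    using kneser_vertexD(3) by auto
  then have "A = B"
    using kneser_vertexD[OF 0(2)] kneser_vertexD[OF B] by (simp add: card_subset_eq)
  then show ?case
    by simp
next
  case (Suc m)
  note A = kneser_vertexD[OF Suc.prems] and B' = kneser_vertexD[OF B]
  obtain x where x: "x \<in> A - B"
    using Suc.hyps(2) by (metis card.empty ex_in_conv nat.distinct(1))
  have "card (B - A) = card (A - B)"
    using A B' by (simp add: card_Diff_subset_Int Int_commute)
  then obtain y where y: "y \<in> B - A"
    using Suc.hyps(2) by (metis card.empty ex_in_conv nat.distinct(1))
  \<comment> \<open>A and A' have a common neighbour, which exists because n \<ge> 2k + 1.\<close>
  define A' where "A' = insert y (A - {x})"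
  have "card A > 0"
    using x A(3) card_gt_0_iff by blast
  then have A': "A' \<in> kneser_vertices n k"
    using A B' x y unfolding A'_def kneser_vertices_def by (auto simp: card_insert_if)
  have "A' - B = (A - B) - {x}"
    unfolding A'_def using y by auto
  then have "card (A' - B) = m"
    using Suc.hyps(2) x A(3) by simp
  have "card ({1..n} - insert y A) = n - (k + 1)"
    using A B' y by (subst card_Diff_subset) (auto simp: card_insert_if)
  then have "k \<le> card ({1..n} - insert y A)"
    using n by simp
  then obtain Z where Z: "Z \<subseteq> {1..n} - insert y A" "card Z = k"
    by (rule obtain_subset_with_card_n)
  then have "Z \<in> kneser_vertices n k"
    unfolding kneser_vertices_def by auto
  then have "induced_rel kneser_adj (kneser_vertices n k) A Z"
    "induced_rel kneser_adj (kneser_vertices n k) Z A'"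
    using Suc.prems A' Z unfolding induced_rel_def kneser_adj_def A'_def by auto
  moreover have "(induced_rel kneser_adj (kneser_vertices n k))\<^sup>*\<^sup>* A' B"
    using Suc.hyps(1) \<open>card (A' - B) = m\<close> A' by blast
  ultimately show ?case
    by (meson converse_rtranclp_into_rtranclp)
qed

lemma kneser_connected:
  assumes "2 * k + 1 \<le> n"
  shows "connected_on kneser_adj (kneser_vertices n k)"
proof -
  have "k \<le> card {1..n}"
    using assms by simp
  then obtain A where "A \<subseteq> {1..n}" "card A = k"
    by (rule obtain_subset_with_card_n)
  then have "kneser_vertices n k \<noteq> {}"
    unfolding kneser_vertices_def by blast
  then show ?thesis
    unfolding connected_on_def using kneser_reachable[OF assms] by blast
qed

lemma kneser_clique_card:
  assumes K: "K \<subseteq> kneser_vertices n k"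
    and clique: "\<And>A B. A \<in> K \<Longrightarrow> B \<in> K \<Longrightarrow> A \<noteq> B \<Longrightarrow> kneser_adj A B"
  shows "card K * k \<le> n"
proof -
  have "card (\<Union>K) = (\<Sum>A\<in>K. card A)"
    using K clique kneser_vertexD(3)
    by (intro card_Union_disjoint) (auto simp: pairwise_def disjnt_def kneser_adj_def)
  also have "\<dots> = (\<Sum>A\<in>K. k)"
    by (rule sum.cong[OF refl]) (use K kneser_vertexD(2) in blast)
  also have "\<dots> = card K * k"
    by simp
  finally have "card K * k = card (\<Union>K)" ..
  also have "\<dots> \<le> card {1..n}"
  proof (rule card_mono)
    show "\<Union>K \<subseteq> {1..n}"
      using K kneser_vertexD(1) by blast
  qed simp
  finally show ?thesis
    by simp
qed

lemma kneser_degree_bound: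
  assumes "2 \<le> k" "2 * k + 1 \<le> n"
  shows "n < ((n - k) choose k) * k"
proof -
  have "n < (n - k) * 2"
    using assms by simp
  also have "\<dots> \<le> (n - k) * k"
    using assms(1) by simp
  also have "\<dots> \<le> ((n - k) choose k) * k"
    using assms upper_le_binomial[of k "n - k"] by simp
  finally show ?thesis .
qed

lemma kneser_odd_cycle:
  assumes "1 \<le> k" "2 * k + 1 \<le> n"
  shows "\<exists>x\<in>kneser_vertices n k. \<exists>y\<in>kneser_vertices n k. kneser_adj x y \<and> (x \<in> F \<longleftrightarrow> y \<in> F)"
proof (rule ccontr)
  assume "\<not> ?thesis"
  then have alternate: "x \<in> F \<longleftrightarrow> y \<notin> F"
    if "x \<in> kneser_vertices n k" "y \<in> kneser_vertices n k" "kneser_adj x y" for x y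
    using that by blast
  \<comment> \<open>The closed walk T 0, Z 0, T 1, Z 1, ..., Z (k - 1), T k, T 0 has odd length 2k + 1.\<close>
  define T where "T j = {j + 1..j + k}" for j :: nat
  define Z where "Z j = {1..2 * k + 1} - {j + 1..j + k + 1}" for j :: nat
  have T: "T j \<in> kneser_vertices n k" if "j \<le> k" for j
    using that assms unfolding T_def kneser_vertices_def by auto
  have Z: "Z j \<in> kneser_vertices n k" if "j \<le> k" for j
  proof -
    have "card (Z j) = (2 * k + 1) - (k + 1)"
      unfolding Z_def using that by (subst card_Diff_subset) auto
    then show ?thesis
      using assms unfolding Z_def kneser_vertices_def by auto
  qed
  have step: "T (Suc j) \<in> F \<longleftrightarrow> T j \<in> F" if "j < k" for j
  proof -
    have "kneser_adj (T j) (Z j)" "kneser_adj (Z j) (T (Suc j))"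
      unfolding kneser_adj_def T_def Z_def by auto
    then show ?thesis
      using alternate T Z that by (meson less_imp_le_nat Suc_leI)
  qed
  have "T j \<in> F \<longleftrightarrow> T 0 \<in> F" if "j \<le> k" for j
    using that by (induction j) (auto simp: step)
  moreover have "kneser_adj (T 0) (T k)"
    unfolding kneser_adj_def T_def by auto
  ultimately show False
    using alternate T by blast
qed

lemma kneser_components_le_one:
  assumes "k \<le> 1" "F \<subseteq> kneser_vertices n k"
  shows "card (components kneser_adj F) \<le> 1"
proof -
  have "kneser_adj A B" if "A \<in> F" "B \<in> F" "A \<noteq> B" for A B
  proof -
    have A: "card A = k" "finite A" and B: "card B = k" "finite B"
      using that assms(2) kneser_vertexD(2,3) by blast+
    show ?thesis
    proof (cases "k = 0")
      case True
      then show ?thesis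
        using A B that(3) by simp
    next
      case False
      then obtain a b where "A = {a}" "B = {b}"
        using A(1) B(1) assms(1) by (metis card_1_singletonE le_neq_implies_less less_one)
      then show ?thesis
        using that(3) unfolding kneser_adj_def by auto
    qed
  qed
  then have "components kneser_adj F \<subseteq> {F}"
    by (rule components_of_complete)
  then show ?thesis
    using card_mono[of "{F}"] by fastforce
qed

lemma kneser_components_less_than_cut:
  assumes "2 \<le> k" "2 * k + 1 \<le> n" and cut: "vertex_cut kneser_adj (kneser_vertices n k) S"
  shows "card (components kneser_adj (kneser_vertices n k - S)) < card S"
proof -
  interpret vertex_transitive_graph kneser_adj "kneser_vertices n k" "(n - k) choose k"
    using assms(1) by (simp add: kneser_vertex_transitive)
  have connected: "connected_on kneser_adj (kneser_vertices n k)"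
    using assms(2) by (rule kneser_connected)
  have "n - k \<le> (n - k) choose k"
    using assms(1,2) by (intro upper_le_binomial) auto
  then have "3 \<le> (n - k) choose k"
    using assms(1,2) by linarith
  moreover have "\<exists>A\<in>K. \<exists>B\<in>K. A \<noteq> B \<and> \<not> kneser_adj A B"
    if "K \<subseteq> kneser_vertices n k" "card K = (n - k) choose k" for K
    using kneser_clique_card[OF that(1)] kneser_degree_bound[OF assms(1,2)] that(2)
    by (metis not_le)
  ultimately have "(n - k) choose k < boundary X" if "nontrivial_cut X" for X
    using boundary_gt_degree[OF connected] that by blast
  then show ?thesis
    using components_less_than_cut[OF connected _ _ cut] kneser_odd_cycle assms by simp
qed

theorem lemma2p14:
  fixes n k :: nat and S :: "nat set set"
  assumes "n \<ge> 2 * k + 1"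
    and "vertex_cut kneser_adj (kneser_vertices n k) S"
    and "real (card S) / real (card (components kneser_adj (kneser_vertices n k - S)))
           = toughness kneser_adj (kneser_vertices n k)"
  shows "\<forall>C \<in> components kneser_adj (kneser_vertices n k - S).
           card C = 1
         \<or> (card C = 2 \<and> connected_on kneser_adj C)
         \<or> biconnected kneser_adj C"
proof
  fix C
  assume C: "C \<in> components kneser_adj (kneser_vertices n k - S)"
  have "2 \<le> k"
  proof (rule ccontr)
    assume "\<not> 2 \<le> k"
    then show False
      using kneser_components_le_one[of k "kneser_vertices n k - S" n] assms(2)
      unfolding vertex_cut_def by simp
  qed
  then show "card C = 1 \<or> (card C = 2 \<and> connected_on kneser_adj C) \<or> biconnected kneser_adj C"
    using tough_cut_components[OF symp_kneser_adj finite_kneser_vertices _ assms(2,3) C]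
      kneser_components_less_than_cut assms(1) by simp
qed

end
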